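(* Assume $n\ge 3$. Let $|\Psi^{\mathrm h}_0\rangle$ and $|\Psi^{\mathrm c}_0\rangle$ be initial states with $p^{\mathrm h}_0(0)>0$, $p^{\mathrm c}_0(0)>0$, and $D_I^{\mathrm h}(0)>D_I^{\mathrm c}(0)$. Define $r^{\mathrm h}=\frac{p^{\mathrm h}_1(0)}{p^{\mathrm h}_0(0)}$, $r^{\mathrm c}=\frac{p^{\mathrm c}_1(0)}{p^{\mathrm c}_0(0)}$, $s^{\mathrm h}=\frac{1-p^{\mathrm h}_0(0)}{p^{\mathrm h}_0(0)}$. If $r^{\mathrm h}<r^{\mathrm c}$ and $\epsilon>0$ satisfies $$\epsilon<\left(1+\frac{1}{r^{\mathrm c}}\left(\frac{s^{\mathrm h}-r^{\mathrm h}}{r^{\mathrm c}-r^{\mathrm h}}\right)^{\frac{E_1}{E_2-E_1}}\right)^{-1},$$ then the Mpemba effect with respect to $D_I$ occurs before the threshold $\epsilon$, i.e. there exists $\tau^\star>0$ such that $D_I^{\mathrm h}(\tau^\star)=D_I^{\mathrm c}(\tau^\star)>\epsilon$ and $D_I^{\mathrm h}(\tau)<D_I^{\mathrm c}(\tau)$ for all $\tau>\tau^\star$.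
   Context: Let $H$ be a Hamiltonian on an $n$-dimensional Hilbert space with nondegenerate eigenvalues $0=E_0<E_1<\dots<E_{n-1}$ and orthonormal eigenvectors $|E_0\rangle,\dots,|E_{n-1}\rangle$. For a pure initial state $|\Psi_0\rangle$ and real $\tau$, QITE is $|\Psi(\tau)\rangle=e^{-H\tau}|\Psi_0\rangle/\sqrt{\langle\Psi_0|e^{-2H\tau}|\Psi_0\rangle}$, with populations $p_i(\tau)=|\langle E_i|\Psi(\tau)\rangle|^2=p_i(0)e^{-2E_i\tau}/\sum_{j}p_j(0)e^{-2E_j\tau}$. The ground-state infidelity is $D_I(\tau)=1-p_0(\tau)$. Superscripts $\mathrm h$ and $\mathrm c$ denote quantities for the QITE trajectories starting from $|\Psi^{\mathrm h}_0\rangle$ and $|\Psi^{\mathrm c}_0\rangle$ respectively. *)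

theory Defs
  imports "HOL-Analysis.Analysis"
begin

text \<open>We work in the (orthonormal) energy eigenbasis |E_0>,...,|E_(n-1)> of H.
  A pure state is given by its coordinates psi i = <E_i|Psi_0> (i < n), a unit vector
  in C^n.  H acts diagonally with eigenvalues E i, so e^(-H tau) multiplies the
  i-th coordinate by exp(-E i * tau).\<close>

definition unit_state :: "nat \<Rightarrow> (nat \<Rightarrow> complex) \<Rightarrow> bool" where
  "unit_state n psi \<longleftrightarrow> (\<Sum>i<n. (cmod (psi i))\<^sup>2) = 1"

definition spectrum_ok :: "nat \<Rightarrow> (nat \<Rightarrow> real) \<Rightarrow> bool" where
  "spectrum_ok n E \<longleftrightarrow> E 0 = 0 \<and> (\<forall>i j. i < j \<and> j < n \<longrightarrow> E i < E j)"

text \<open>QITE state coordinates: e^(-H tau)|Psi_0> / sqrt(<Psi_0|e^(-2H tau)|Psi_0>).\<close>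
definition qite_state :: "nat \<Rightarrow> (nat \<Rightarrow> real) \<Rightarrow> (nat \<Rightarrow> complex) \<Rightarrow> real \<Rightarrow> nat \<Rightarrow> complex" where
  "qite_state n E psi tau i =
     complex_of_real (exp (- E i * tau)) * psi i /
     complex_of_real (sqrt (\<Sum>j<n. exp (- 2 * E j * tau) * (cmod (psi j))\<^sup>2))"

definition pop :: "nat \<Rightarrow> (nat \<Rightarrow> real) \<Rightarrow> (nat \<Rightarrow> complex) \<Rightarrow> real \<Rightarrow> nat \<Rightarrow> real" where
  "pop n E psi tau i = (cmod (qite_state n E psi tau i))\<^sup>2"

definition infid :: "nat \<Rightarrow> (nat \<Rightarrow> real) \<Rightarrow> (nat \<Rightarrow> complex) \<Rightarrow> real \<Rightarrow> real" where
  "infid n E psi tau = 1 - pop n E psi tau 0"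

end

theory Submission
  imports Defs
begin

text \<open>With the partition function Z(t) = sum_j p_j(0) exp(-2 E_j t) one has
  D_I(t) = 1 - p_0(0) / Z(t). Keeping the first two terms of Z and bounding the others by
  exp(-2 E_2 t) p_j(0) gives, for t \<ge> 0,
  1 + r exp(-2 E_1 t) \<le> Z(t) / p_0(0) \<le> 1 + r exp(-2 E_1 t) + (s - r) exp(-2 E_2 t).
  Hence D_I^h(t) \<ge> D_I^c(t) forces exp(2 (E_2 - E_1) t) \<le> (s^h - r^h) / (r^c - r^h), so the
  continuous function D_I^h - D_I^c, positive at 0, has a last zero \<tau>*. The same bound at \<tau>*,
  raised to the power E_1 / (E_2 - E_1), together with D_I^c \<ge> 1 - 1 / (1 + r^c exp(-2 E_1 t)),
  gives D_I^c(\<tau>*) > \<epsilon>.\<close>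

lemma last_zero_crossing:
  fixes G :: "real \<Rightarrow> real"
  assumes cont: "continuous_on {0..} G" and G0: "G 0 > 0"
    and bounded: "\<And>t. 0 \<le> t \<Longrightarrow> 0 \<le> G t \<Longrightarrow> t \<le> B"
  shows "\<exists>ts > 0. G ts = 0 \<and> (\<forall>t > ts. G t < 0)"
proof -
  define S where "S = {0..} \<inter> G -` {0..}"
  have "closed S"
    unfolding S_def by (intro continuous_closed_preimage cont) auto
  moreover have "0 \<in> S" "bdd_above S"
    using G0 bounded by (auto simp: S_def bdd_above_def)
  ultimately have ts_in: "Sup S \<in> S"
    using closed_contains_Sup by blast
  have after: "G t < 0" if "t > Sup S" for t
    using that cSup_upper[OF _ \<open>bdd_above S\<close>, of t] ts_in by (force simp: S_def)
  have "G (Sup S + 1) \<le> 0" "0 \<le> G (Sup S)"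
    using after[of "Sup S + 1"] ts_in by (auto simp: S_def)
  moreover have "continuous_on {Sup S..Sup S + 1} G"
    using ts_in by (auto simp: S_def intro: continuous_on_subset[OF cont])
  ultimately obtain x where x: "Sup S \<le> x" "x \<le> Sup S + 1" "G x = 0"
    using IVT2'[of G "Sup S + 1" 0 "Sup S"] by auto
  have "x = Sup S"
    using x after[of x] by fastforce
  moreover have "Sup S \<noteq> 0"
    using x G0 \<open>x = Sup S\<close> by auto
  ultimately show ?thesis
    using ts_in after x by (auto simp: S_def intro!: exI[of _ "Sup S"])
qed

definition partition_fn :: "nat \<Rightarrow> (nat \<Rightarrow> real) \<Rightarrow> (nat \<Rightarrow> real) \<Rightarrow> real \<Rightarrow> real" where
  "partition_fn n E p t = (\<Sum>j<n. exp (- 2 * E j * t) * p j)"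

definition prob_vector :: "nat \<Rightarrow> (nat \<Rightarrow> real) \<Rightarrow> bool" where
  "prob_vector n p \<longleftrightarrow> (\<forall>j<n. 0 \<le> p j) \<and> (\<Sum>j<n. p j) = 1"

lemma pop_initial: "unit_state n psi \<Longrightarrow> pop n E psi 0 i = (cmod (psi i))\<^sup>2"
  unfolding pop_def qite_state_def unit_state_def by (simp add: norm_divide norm_mult)

lemma prob_vector_pop_initial: "unit_state n psi \<Longrightarrow> prob_vector n (pop n E psi 0)"
  by (simp add: prob_vector_def pop_initial) (simp add: unit_state_def)

lemma pop_eq_partition_fn:
  assumes "unit_state n psi"
  shows "pop n E psi t i = exp (- 2 * E i * t) * pop n E psi 0 i / partition_fn n E (pop n E psi 0) t"
proof -
  have "0 \<le> (\<Sum>j<n. exp (- 2 * E j * t) * (cmod (psi j))\<^sup>2)"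
    by (intro sum_nonneg) auto
  then show ?thesis
    unfolding partition_fn_def pop_initial[OF assms] unfolding pop_def qite_state_def
    by (simp add: norm_divide norm_mult power_divide power_mult_distrib mult.assoc
        flip: exp_of_nat_mult)
qed

lemma infid_eq_partition_fn:
  "E 0 = 0 \<Longrightarrow> unit_state n psi \<Longrightarrow>
    infid n E psi t = 1 - pop n E psi 0 0 / partition_fn n E (pop n E psi 0) t"
  by (simp add: infid_def pop_eq_partition_fn[of n psi E t 0])

lemma partition_fn_split:
  "2 \<le> n \<Longrightarrow> E 0 = 0 \<Longrightarrow> partition_fn n E p t =
    p 0 + exp (- 2 * E 1 * t) * p 1 + (\<Sum>j = 2..<n. exp (- 2 * E j * t) * p j)"
  unfolding partition_fn_def
  by (simp add: lessThan_atLeast0 sum.atLeast_Suc_lessThan numeral_2_eq_2)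

lemma partition_fn_lower_bound:
  assumes "2 \<le> n" "E 0 = 0" "prob_vector n p" "p 0 > 0"
  shows "1 + exp (- 2 * E 1 * t) * (p 1 / p 0) \<le> partition_fn n E p t / p 0"
proof -
  have "0 \<le> (\<Sum>j = 2..<n. exp (- 2 * E j * t) * p j)"
    using assms(3) by (intro sum_nonneg) (simp add: prob_vector_def)
  then have "p 0 + exp (- 2 * E 1 * t) * p 1 \<le> partition_fn n E p t"
    using partition_fn_split[of n E, OF assms(1,2)] by simp
  then have "(p 0 + exp (- 2 * E 1 * t) * p 1) / p 0 \<le> partition_fn n E p t / p 0"
    using assms(4) by (simp add: divide_right_mono)
  then show ?thesis
    using assms(4) by (simp add: add_divide_distrib)
qed

lemma partition_fn_pos:
  assumes "2 \<le> n" "E 0 = 0" "prob_vector n p" "p 0 > 0"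
  shows "partition_fn n E p t > 0"
proof -
  have "0 \<le> exp (- 2 * E 1 * t) * (p 1 / p 0)"
    using assms(1,3,4) by (simp add: prob_vector_def)
  then have "1 \<le> partition_fn n E p t / p 0"
    using partition_fn_lower_bound[of n E p, OF assms, of t] by linarith
  then show ?thesis
    using assms(4) by (simp add: field_simps)
qed

lemma partition_fn_upper_bound:
  assumes "2 \<le> n" "spectrum_ok n E" "prob_vector n p" "p 0 > 0" "0 \<le> t"
  shows "partition_fn n E p t / p 0 \<le>
    1 + exp (- 2 * E 1 * t) * (p 1 / p 0) + exp (- 2 * E 2 * t) * ((1 - p 0) / p 0 - p 1 / p 0)"
proof -
  have E0: "E 0 = 0"
    using assms(2) by (simp add: spectrum_ok_def)
  have "(\<Sum>j = 2..<n. exp (- 2 * E j * t) * p j) \<le> (\<Sum>j = 2..<n. exp (- 2 * E 2 * t) * p j)"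
  proof (intro sum_mono mult_right_mono)
    fix j assume j: "j \<in> {2..<n}"
    then have "E 2 \<le> E j"
      using assms(2) unfolding spectrum_ok_def by (cases "j = 2") (auto intro: less_imp_le)
    then show "exp (- 2 * E j * t) \<le> exp (- 2 * E 2 * t)"
      using assms(5) by (simp add: mult_right_mono)
    show "0 \<le> p j"
      using j assms(3) by (simp add: prob_vector_def)
  qed
  also have "\<dots> = exp (- 2 * E 2 * t) * (1 - p 0 - p 1)"
    \<comment> \<open>at zero energies the partition function is the total probability\<close>
    using assms(3) partition_fn_split[of n "\<lambda>_. 0" p t, OF assms(1)]
    by (simp add: prob_vector_def partition_fn_def flip: sum_distrib_left)
  finally have "partition_fn n E p t \<le>
      p 0 + exp (- 2 * E 1 * t) * p 1 + exp (- 2 * E 2 * t) * (1 - p 0 - p 1)"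
    using partition_fn_split[of n E, OF assms(1) E0] by simp
  then have "partition_fn n E p t / p 0 \<le>
      (p 0 + exp (- 2 * E 1 * t) * p 1 + exp (- 2 * E 2 * t) * (1 - p 0 - p 1)) / p 0"
    using assms(4) by (simp add: divide_right_mono)
  also have "\<dots> =
      1 + exp (- 2 * E 1 * t) * (p 1 / p 0) + exp (- 2 * E 2 * t) * ((1 - p 0) / p 0 - p 1 / p 0)"
    using assms(4) by (simp add: field_simps)
  finally show ?thesis .
qed

lemma continuous_on_infid:
  assumes "2 \<le> n" "E 0 = 0" "unit_state n psi" "pop n E psi 0 0 > 0"
  shows "continuous_on S (infid n E psi)"
proof -
  have "partition_fn n E (pop n E psi 0) t \<noteq> 0" for t
    using partition_fn_pos[of n E "pop n E psi 0", OF assms(1,2) prob_vector_pop_initial assms(4)]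
      assms(3) by (metis less_irrefl)
  then have "continuous_on S (\<lambda>t. 1 - pop n E psi 0 0 / partition_fn n E (pop n E psi 0) t)"
    unfolding partition_fn_def by (intro continuous_intros) auto
  then show ?thesis
    by (simp add: infid_eq_partition_fn[of E n psi, OF assms(2,3)])
qed

lemma infid_lower_bound:
  assumes "2 \<le> n" "E 0 = 0" "unit_state n psi" "pop n E psi 0 0 > 0"
  shows "1 - 1 / (1 + exp (- 2 * E 1 * t) * (pop n E psi 0 1 / pop n E psi 0 0))
    \<le> infid n E psi t"
proof -
  let ?p = "pop n E psi 0"
  let ?L = "1 + exp (- 2 * E 1 * t) * (?p 1 / ?p 0)"
  have "0 < ?L"
    using assms(4) by (simp add: pop_initial[OF assms(3)] add_pos_nonneg)
  moreover have "?L \<le> partition_fn n E ?p t / ?p 0"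
    using partition_fn_lower_bound[of n E ?p, OF assms(1,2)
        prob_vector_pop_initial[OF assms(3)] assms(4)] .
  ultimately have "1 / (partition_fn n E ?p t / ?p 0) \<le> 1 / ?L"
    by (intro frac_le) auto
  then show ?thesis
    by (simp add: infid_eq_partition_fn[of E n psi, OF assms(2,3)])
qed

lemma inverse_le_infid:
  fixes n :: nat and E :: "nat \<Rightarrow> real" and psi :: "nat \<Rightarrow> complex" and t :: real
  defines "r \<equiv> pop n E psi 0 1 / pop n E psi 0 0"
  assumes "2 \<le> n" "E 0 = 0" "unit_state n psi" "pop n E psi 0 0 > 0"
    and r: "0 < r" and Y: "exp (2 * E 1 * t) \<le> Y"
  shows "inverse (1 + (1 / r) * Y) \<le> infid n E psi t"
proof -
  have "inverse (1 + (1 / r) * Y) \<le> inverse (1 + (1 / r) * exp (2 * E 1 * t))"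
    using r Y by (intro le_imp_inverse_le add_left_mono mult_left_mono) (auto intro: add_pos_pos)
  also have "\<dots> = 1 - 1 / (1 + exp (- 2 * E 1 * t) * r)"
  proof -
    have "0 < r + exp (2 * E 1 * t)"
      using r by (simp add: add_pos_pos)
    then show ?thesis
      using r by (simp add: exp_minus field_simps)
  qed
  also have "\<dots> \<le> infid n E psi t"
    unfolding r_def using infid_lower_bound[OF assms(2-5)] .
  finally show ?thesis .
qed

lemma infid_crossing_bound:
  fixes n :: nat and E :: "nat \<Rightarrow> real" and psih psic :: "nat \<Rightarrow> complex" and t :: real
  defines "rh \<equiv> pop n E psih 0 1 / pop n E psih 0 0"
    and "rc \<equiv> pop n E psic 0 1 / pop n E psic 0 0"
    and "sh \<equiv> (1 - pop n E psih 0 0) / pop n E psih 0 0"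
  assumes n: "2 \<le> n" and spec: "spectrum_ok n E"
    and uh: "unit_state n psih" and uc: "unit_state n psic"
    and p0h: "pop n E psih 0 0 > 0" and p0c: "pop n E psic 0 0 > 0"
    and rr: "rh < rc" and t: "0 \<le> t" and crossed: "infid n E psic t \<le> infid n E psih t"
  shows "exp (2 * (E 2 - E 1) * t) \<le> (sh - rh) / (rc - rh)"
proof -
  let ?a = "pop n E psih 0" and ?b = "pop n E psic 0"
  have E0: "E 0 = 0"
    using spec by (simp add: spectrum_ok_def)
  have a: "prob_vector n ?a" and b: "prob_vector n ?b"
    using uh uc by (simp_all add: prob_vector_pop_initial)
  have "1 + exp (- 2 * E 1 * t) * rc \<le> partition_fn n E ?b t / ?b 0"
    unfolding rc_def using partition_fn_lower_bound[of n E ?b, OF n E0 b p0c] .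
  also have "\<dots> \<le> partition_fn n E ?a t / ?a 0"
    using crossed partition_fn_pos[of n E ?a, OF n E0 a p0h, of t]
      partition_fn_pos[of n E ?b, OF n E0 b p0c, of t]
      p0h p0c
    by (simp add: infid_eq_partition_fn[of E n, OF E0 uh]
      infid_eq_partition_fn[of E n, OF E0 uc] field_simps)
  also have "\<dots> \<le> 1 + exp (- 2 * E 1 * t) * rh + exp (- 2 * E 2 * t) * (sh - rh)"
    unfolding rh_def sh_def using partition_fn_upper_bound[OF n spec a p0h t] .
  finally have "(rc - rh) * exp (- 2 * E 1 * t) \<le> (sh - rh) * exp (- 2 * E 2 * t)"
    by (simp add: algebra_simps)
  moreover have "exp (- 2 * E 1 * t) = exp (2 * (E 2 - E 1) * t) * exp (- 2 * E 2 * t)"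
    by (simp add: algebra_simps flip: exp_add)
  ultimately show ?thesis
    using rr by (simp add: pos_le_divide_eq mult.commute mult.left_commute)
qed

theorem theorem2:
  fixes n :: nat and E :: "nat \<Rightarrow> real" and psih psic :: "nat \<Rightarrow> complex" and eps :: real
  assumes n3: "n \<ge> 3"
    and spec: "spectrum_ok n E"
    and uh: "unit_state n psih" and uc: "unit_state n psic"
    and p0h: "pop n E psih 0 0 > 0" and p0c: "pop n E psic 0 0 > 0"
    and Dhc: "infid n E psih 0 > infid n E psic 0"
    and rr: "pop n E psih 0 1 / pop n E psih 0 0 < pop n E psic 0 1 / pop n E psic 0 0"
    and eps_pos: "eps > 0"
    and eps_bound:
      "eps < inverse (1 + (1 / (pop n E psic 0 1 / pop n E psic 0 0)) *
              (((1 - pop n E psih 0 0) / pop n E psih 0 0 - pop n E psih 0 1 / pop n E psih 0 0) /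
               (pop n E psic 0 1 / pop n E psic 0 0 - pop n E psih 0 1 / pop n E psih 0 0))
              powr (E 1 / (E 2 - E 1)))"
  shows "\<exists>tstar > 0. infid n E psih tstar = infid n E psic tstar \<and> infid n E psic tstar > eps \<and>
           (\<forall>tau > tstar. infid n E psih tau < infid n E psic tau)"
proof -
  define rh where "rh = pop n E psih 0 1 / pop n E psih 0 0"
  define rc where "rc = pop n E psic 0 1 / pop n E psic 0 0"
  define X where "X = ((1 - pop n E psih 0 0) / pop n E psih 0 0 - rh) / (rc - rh)"
  have n: "2 \<le> n" and E0: "E 0 = 0" and E_less: "\<And>i j. i < j \<Longrightarrow> j < n \<Longrightarrow> E i < E j"
    using n3 spec unfolding spectrum_ok_def by auto
  have E1: "0 < E 1" and E12: "E 1 < E 2"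
    using E_less[of 0 1] E_less[of 1 2] E0 n3 by auto
  have "0 \<le> rh"
    using p0h by (simp add: rh_def pop_initial[OF uh])
  with rr have rc: "0 < rc"
    by (simp add: rh_def rc_def)
  have crossing: "exp (2 * (E 2 - E 1) * t) \<le> X"
    if "0 \<le> t" "infid n E psic t \<le> infid n E psih t" for t
    using infid_crossing_bound[OF n spec uh uc p0h p0c rr that] by (simp add: X_def rh_def rc_def)
  have bounded: "t \<le> (X - 1) / (2 * (E 2 - E 1))"
    if "0 \<le> t" "infid n E psic t \<le> infid n E psih t" for t
  proof -
    have "1 + 2 * (E 2 - E 1) * t \<le> X"
      using exp_ge_add_one_self crossing[OF that] by (rule order_trans)
    then show ?thesis
      using E12 by (simp add: pos_le_divide_eq mult.commute)
  qed
  have "\<exists>ts > 0. infid n E psih ts - infid n E psic ts = 0 \<and>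
      (\<forall>t > ts. infid n E psih t - infid n E psic t < 0)"
    using Dhc bounded
    by (intro last_zero_crossing continuous_on_diff continuous_on_infid n E0 uh uc p0h p0c) auto
  then obtain ts where ts: "0 < ts" "infid n E psih ts = infid n E psic ts"
      and after: "\<forall>t > ts. infid n E psih t < infid n E psic t"
    by auto
  have "exp (2 * E 1 * ts) = exp (2 * (E 2 - E 1) * ts) powr (E 1 / (E 2 - E 1))"
    using E12 by (simp add: powr_def field_simps)
  also have "\<dots> \<le> X powr (E 1 / (E 2 - E 1))"
    using crossing[of ts] ts E1 E12 by (intro powr_mono2) auto
  finally have "inverse (1 + (1 / rc) * X powr (E 1 / (E 2 - E 1))) \<le> infid n E psic ts"
    unfolding rc_def by (rule inverse_le_infid[OF n E0 uc p0c rc[unfolded rc_def]])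
  then show ?thesis
    using eps_bound ts after unfolding X_def rh_def rc_def by force
qed

end
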